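(* Let $\lambda$ be a nonzero real number, $r$ a nonnegative integer, and $p(x)\in\mathbb{C}[x]$ of degree $n$. Let $g(t)=\frac{\lambda(e^t-1)}{e^{\lambda t}-1}$ and $f(t)=\frac{1}{\lambda}(e^{\lambda t}-1)$. Then: (a) If $r>n$, $$p(x)=\sum_{k=0}^{n}\frac{1}{k!}\sum_{j=0}^{k}(-1)^{k-j}\binom{k}{j}\big(g(t)^{r-k}p\big)(j)\;\beta^{(r)}_{k,\lambda}(x).$$ (b) If $r\le n$, $$p(x)=\sum_{k=0}^{r-1}\frac{1}{k!}\sum_{j=0}^{k}(-1)^{k-j}\binom{k}{j}\big(g(t)^{r-k}p\big)(j)\;\beta^{(r)}_{k,\lambda}(x)+\sum_{k=r}^{n}\frac{1}{k!}\sum_{j=0}^{r}(-1)^{r-j}\binom{r}{j}\big(f(t)^{k-r}p\big)(j)\;\beta^{(r)}_{k,\lambda}(x).$$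
   Context: Higher-order degenerate Bernoulli polynomials $\beta^{(r)}_{n,\lambda}(x)$ are defined by $\Big(\frac{t}{(1+\lambda t)^{1/\lambda}-1}\Big)^r(1+\lambda t)^{x/\lambda}=\sum_{n\ge0}\beta^{(r)}_{n,\lambda}(x)\frac{t^n}{n!}$. A formal power series $h(t)=\sum_{k\ge0}c_k\frac{t^k}{k!}$ acts on polynomials as the differential operator $h(t)x^m=\sum_{k=0}^m\binom{m}{k}c_kx^{m-k}$ (i.e. $t=d/dx$); $(h(t)p)(j)$ denotes the resulting polynomial evaluated at $x=j$. *)

theory Defs
  imports "HOL-Computational_Algebra.Computational_Algebra"
begin

definition binom_pow_fps :: "real \<Rightarrow> complex \<Rightarrow> complex fps" where
  "binom_pow_fps lam a = fps_compose (fps_binomial a) (fps_const (of_real lam) * fps_X)"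

definition deg_bernoulli_gf :: "real \<Rightarrow> nat \<Rightarrow> complex \<Rightarrow> complex fps" where
  "deg_bernoulli_gf lam r x =
     (fps_X / (binom_pow_fps lam (1 / of_real lam) - 1)) ^ r * binom_pow_fps lam (x / of_real lam)"

definition deg_bernoulli :: "nat \<Rightarrow> real \<Rightarrow> nat \<Rightarrow> complex \<Rightarrow> complex" where
  "deg_bernoulli r lam n x = fact n * fps_nth (deg_bernoulli_gf lam r x) n"

text \<open>Action of h(t) = sum c_k t^k/k! on polynomials: h(t) x^m = sum_{k<=m} (m choose k) c_k x^(m-k),
  extended linearly; here c_k = k! * (h $ k).\<close>
definition fps_act :: "complex fps \<Rightarrow> complex poly \<Rightarrow> complex poly" where
  "fps_act h p = (\<Sum>m\<le>degree p. smult (coeff p m)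
      (\<Sum>k\<le>m. monom (of_nat (m choose k) * (fact k * fps_nth h k)) (m - k)))"

definition g_fps :: "real \<Rightarrow> complex fps" where
  "g_fps lam = fps_const (of_real lam) * (fps_exp 1 - 1) / (fps_exp (of_real lam) - 1)"

definition f_fps :: "real \<Rightarrow> complex fps" where
  "f_fps lam = fps_const (1 / of_real lam) * (fps_exp (of_real lam) - 1)"

end

theory Submission
  imports Defs
begin

(* Since (1 + lam f(t))^(1/lam) = e^t, composing the generating function of the
   beta^(r)_k(x) with f gives (f(t) / (e^t - 1))^r e^(xt) = g(t)^(-r) e^(xt).
   Pair series with polynomials by <t^k | x^m> = m! [k = m]; then <e^(xt) | p> = p(x) and
   (h(t) p)(y) = <h(t) e^(yt) | p>, so pairing the identity above with p gives
   p(x) = sum_k beta^(r)_k(x) / k! <g^r f^k | p>.  The k-th forward difference at 0 of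
   j |-> (h(t) p)(j) is <h(t) (e^t - 1)^k | p>, and as g f = e^t - 1 the series g^r f^k is
   g^(r-k) (e^t - 1)^k for k <= r and f^(k-r) (e^t - 1)^r for k >= r. *)

lemma subdegree_fps_exp_minus_one:
  fixes c :: "'a::field"
  assumes "c \<noteq> 0"
  shows "subdegree (fps_exp c - 1) = 1"
  using assms by (intro subdegreeI) auto

lemma fps_exp_minus_one_neq_zero:
  fixes c :: "'a::field"
  assumes "c \<noteq> 0"
  shows "fps_exp c - 1 \<noteq> 0"
  using subdegree_fps_exp_minus_one[OF assms] by auto

lemma fps_const_neg_one_power_mult:
  "fps_const ((-1) ^ n * c) = (-1) ^ n * fps_const (c :: 'a::comm_ring_1)"
  by (induction n) (simp_all flip: fps_const_neg)

lemma fps_exp_minus_one_power: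
  "(fps_exp 1 - 1 :: 'a::field_char_0 fps) ^ k
     = (\<Sum>j\<le>k. fps_const ((-1) ^ (k - j) * of_nat (k choose j)) * fps_exp (of_nat j))"
proof -
  have "(fps_exp 1 - 1 :: 'a fps) ^ k = (\<Sum>j\<le>k. of_nat (k choose j) * fps_exp 1 ^ j * (-1) ^ (k - j))"
    using binomial_ring[of "fps_exp 1" "-1 :: 'a fps" k] by simp
  also have "\<dots> = (\<Sum>j\<le>k. fps_const ((-1) ^ (k - j) * of_nat (k choose j)) * fps_exp (of_nat j))"
    by (simp add: fps_const_neg_one_power_mult fps_of_nat fps_exp_power_mult) (simp add: mult_ac)
  finally show ?thesis .
qed

lemma fps_binomial_compose_exp_minus_one:
  fixes a c :: "'a::field_char_0"
  shows "fps_binomial a oo (fps_exp c - 1) = fps_exp (c * a)"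
proof -
  define b where "b = fps_exp c - 1"
  define h where "h = fps_binomial a oo b"
  have b0: "b $ 0 = 0" by (simp add: b_def)
  have "subdegree (1 + fps_X :: 'a fps) = 0"
    by (simp add: subdegree_eq_0_iff)
  then have binomial_ODE: "(1 + fps_X) * fps_deriv (fps_binomial a) = fps_const a * fps_binomial a"
    unfolding fps_binomial_deriv
    using fps_times_divide_eq[of "1 + fps_X" "fps_const a * fps_binomial a"]
    by (simp add: mult.commute)
  \<comment> \<open>\<open>(1 + X) oo b = exp(ct)\<close> is also the factor the chain rule contributes, so \<open>h' = c a h\<close>\<close>
  have "fps_exp c * (fps_deriv (fps_binomial a) oo b) = fps_const a * h"
    using arg_cong[OF binomial_ODE, of "\<lambda>u. u oo b"]
    by (simp add: fps_compose_mult_distrib[OF b0] fps_compose_add_distrib b0 h_def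
        fps_const_mult_apply_left[symmetric]) (simp add: b_def)
  moreover have "fps_deriv h = (fps_deriv (fps_binomial a) oo b) * (fps_const c * fps_exp c)"
    unfolding h_def by (simp add: fps_compose_deriv[OF b0]) (simp add: b_def)
  ultimately have "fps_exp c * fps_deriv h = fps_exp c * (fps_const (c * a) * h)"
    by (simp add: algebra_simps)
  then have "fps_deriv h = fps_const (c * a) * h"
    by simp
  then have "h = fps_const (h $ 0) * fps_exp (c * a)"
    using fps_exp_unique_ODE by blast
  moreover have "h $ 0 = 1"
    by (simp add: h_def)
  ultimately show ?thesis
    by (simp add: h_def b_def)
qed

lemma fps_nth_mult_compose:
  fixes a b c :: "'a::comm_ring_1 fps"
  assumes b0: "b $ 0 = 0" and "m \<le> N"
  shows "(c * (a oo b)) $ m = (\<Sum>k\<le>N. a $ k * (c * b ^ k) $ m)"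
proof -
  have "(c * (a oo b)) $ m = (\<Sum>i=0..m. c $ i * (\<Sum>k=0..m-i. a $ k * (b ^ k) $ (m - i)))"
    by (simp add: fps_mult_nth fps_compose_nth)
  also have "\<dots> = (\<Sum>i=0..m. c $ i * (\<Sum>k\<le>N. a $ k * (b ^ k) $ (m - i)))"
    using \<open>m \<le> N\<close> startsby_zero_power_prefix[OF b0]
    by (intro sum.cong refl arg_cong[where f="(*) _"] sum.mono_neutral_left) auto
  also have "\<dots> = (\<Sum>k\<le>N. a $ k * (c * b ^ k) $ m)"
    by (simp add: fps_mult_nth sum_distrib_left sum_distrib_right mult_ac sum.swap[of _ "{0..m}"])
  finally show ?thesis .
qed

definition umbral_pair :: "'a::{comm_semiring_1,semiring_char_0} fps \<Rightarrow> 'a poly \<Rightarrow> 'a" where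
  "umbral_pair h p = (\<Sum>m\<le>degree p. coeff p m * fact m * h $ m)"

lemma umbral_pair_cong:
  assumes "\<And>m. m \<le> degree p \<Longrightarrow> h $ m = h' $ m"
  shows "umbral_pair h p = umbral_pair h' p"
  unfolding umbral_pair_def using assms by simp

lemma umbral_pair_sum: "umbral_pair (\<Sum>i\<in>I. h i) p = (\<Sum>i\<in>I. umbral_pair (h i) p)"
  unfolding umbral_pair_def fps_sum_nth by (simp add: sum_distrib_left sum.swap[of _ I])

lemma umbral_pair_const_mult: "umbral_pair (fps_const c * h) p = c * umbral_pair h p"
  unfolding umbral_pair_def by (simp add: sum_distrib_left mult_ac)

lemma umbral_pair_fps_exp: "umbral_pair (fps_exp x) p = poly p (x :: 'a::field_char_0)"
  unfolding umbral_pair_def by (simp add: poly_altdef)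

lemma poly_fps_act: "poly (fps_act h p) y = umbral_pair (h * fps_exp y) p"
proof -
  have "poly (\<Sum>k\<le>m. monom (of_nat (m choose k) * (fact k * h $ k)) (m - k)) y
      = fact m * (h * fps_exp y) $ m" for m
  proof -
    have "of_nat (m choose k) * (fact k * h $ k) * y ^ (m - k)
        = fact m * (h $ k * (y ^ (m - k) / fact (m - k)))" if "k \<le> m" for k
      using binomial_fact_lemma[OF that, THEN arg_cong[where f = "of_nat :: nat \<Rightarrow> complex"]]
      by (simp add: field_simps)
    then show ?thesis
      by (simp add: poly_sum poly_monom fps_mult_nth atLeast0AtMost sum_distrib_left)
  qed
  then show ?thesis
    by (simp add: fps_act_def umbral_pair_def poly_sum mult.assoc)
qed

lemma sum_forward_difference_fps_act:
  "(\<Sum>j\<le>k. (-1) ^ (k - j) * of_nat (k choose j) * poly (fps_act h p) (of_nat j))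
     = umbral_pair (h * (fps_exp 1 - 1) ^ k) p"
  by (simp add: fps_exp_minus_one_power poly_fps_act sum_distrib_left umbral_pair_sum
      umbral_pair_const_mult mult.left_commute[of h])

lemma binom_pow_fps_nth: "binom_pow_fps lam a $ n = of_real lam ^ n * (a gchoose n)"
  unfolding binom_pow_fps_def fps_compose_linear by simp

lemma f_fps_nth_0 [simp]: "f_fps lam $ 0 = 0"
  by (simp add: f_fps_def)

lemma g_fps_mult_f_fps:
  assumes "lam \<noteq> 0"
  shows "g_fps lam * f_fps lam = fps_exp 1 - 1"
proof -
  define E where "E = fps_exp (of_real lam) - (1 :: complex fps)"
  define A where "A = fps_const (of_real lam) * (fps_exp 1 - (1 :: complex fps))"
  have lam: "complex_of_real lam \<noteq> 0"
    using assms by simp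
  have "E \<noteq> 0" "subdegree E = 1"
    using fps_exp_minus_one_neq_zero[OF lam] subdegree_fps_exp_minus_one[OF lam]
    by (simp_all add: E_def)
  moreover have "subdegree A = 1"
    using lam subdegree_fps_exp_minus_one[of "1 :: complex"] fps_exp_minus_one_neq_zero[of "1 :: complex"]
    by (simp add: A_def)
  ultimately have "A / E * E = A"
    by (simp add: fps_times_divide_eq)
  then have "g_fps lam * f_fps lam = fps_const (1 / of_real lam) * A"
    unfolding g_fps_def f_fps_def A_def[symmetric] E_def[symmetric] by (simp add: mult_ac)
  also have "\<dots> = fps_exp 1 - 1"
    using lam by (simp add: A_def mult.assoc[symmetric] fps_const_mult[symmetric] del: fps_const_mult)
  finally show ?thesis .
qed

lemma g_fps_power_mult_exp_minus_one_power:
  assumes "lam \<noteq> 0" "k \<le> r"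
  shows "g_fps lam ^ (r - k) * (fps_exp 1 - 1) ^ k = g_fps lam ^ r * f_fps lam ^ k"
  using assms by (simp add: g_fps_mult_f_fps[symmetric] power_mult_distrib mult.assoc[symmetric]
      power_add[symmetric])

lemma f_fps_power_mult_exp_minus_one_power:
  assumes "lam \<noteq> 0" "r \<le> k"
  shows "f_fps lam ^ (k - r) * (fps_exp 1 - 1) ^ r = g_fps lam ^ r * f_fps lam ^ k"
  using assms by (simp add: g_fps_mult_f_fps[symmetric] power_mult_distrib mult_ac
      power_add[symmetric])

lemma binom_pow_fps_compose_f_fps:
  assumes "lam \<noteq> 0"
  shows "binom_pow_fps lam a oo f_fps lam = fps_exp (a * of_real lam)"
proof -
  have "(fps_const (of_real lam) * fps_X) oo f_fps lam = fps_exp (complex_of_real lam) - 1"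
    using assms
    by (simp add: fps_const_mult_apply_left[symmetric] f_fps_def mult.assoc[symmetric]
        fps_const_mult[symmetric] del: fps_const_mult)
  moreover have "binom_pow_fps lam a oo f_fps lam
      = fps_binomial a oo ((fps_const (of_real lam) * fps_X) oo f_fps lam)"
    unfolding binom_pow_fps_def by (rule fps_compose_assoc[symmetric]) simp_all
  ultimately show ?thesis
    by (simp add: fps_binomial_compose_exp_minus_one mult.commute)
qed

lemma deg_bernoulli_gf_compose_f_fps:
  assumes "lam \<noteq> 0"
  shows "g_fps lam ^ r * (deg_bernoulli_gf lam r x oo f_fps lam) = fps_exp x"
proof -
  have lam: "complex_of_real lam \<noteq> 0"
    using assms by simp
  define D where "D = binom_pow_fps lam (1 / of_real lam) - 1"
  define Q where "Q = fps_X / D"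
  have "D $ 0 = 0" "D $ 1 = 1"
    using lam by (simp_all add: D_def binom_pow_fps_nth)
  then have "D \<noteq> 0" "subdegree D = 1"
    by (auto intro: subdegreeI)
  then have "Q * D = fps_X"
    unfolding Q_def by (simp add: fps_times_divide_eq)
  then have "(Q * D) oo f_fps lam = f_fps lam"
    by simp
  then have Q_f: "(Q oo f_fps lam) * (fps_exp 1 - 1) = f_fps lam"
    using lam
    by (simp add: fps_compose_mult_distrib fps_compose_sub_distrib D_def binom_pow_fps_compose_f_fps[OF assms])
  have "((Q oo f_fps lam) * g_fps lam) * (fps_exp 1 - 1) = ((Q oo f_fps lam) * (fps_exp 1 - 1)) * g_fps lam"
    by (simp only: mult.assoc mult.commute[of "g_fps lam"])
  also have "\<dots> = 1 * (fps_exp 1 - 1)"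
    unfolding Q_f mult.commute[of "f_fps lam"] g_fps_mult_f_fps[OF assms] by simp
  finally have Q_g: "(Q oo f_fps lam) * g_fps lam = 1"
    by (simp only: mult_right_cancel[OF fps_exp_minus_one_neq_zero[OF one_neq_zero]])
  have "deg_bernoulli_gf lam r x oo f_fps lam = (Q oo f_fps lam) ^ r * fps_exp x"
    unfolding deg_bernoulli_gf_def Q_def[symmetric] D_def[symmetric]
    using lam by (simp add: fps_compose_mult_distrib fps_compose_power binom_pow_fps_compose_f_fps[OF assms])
  then have "g_fps lam ^ r * (deg_bernoulli_gf lam r x oo f_fps lam) = ((Q oo f_fps lam) * g_fps lam) ^ r * fps_exp x"
    by (simp add: power_mult_distrib algebra_simps)
  then show ?thesis
    using Q_g by simp
qed

lemma poly_eq_deg_bernoulli_expansion: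
  assumes "lam \<noteq> 0"
  shows "poly p x = (\<Sum>k\<le>degree p.
           (1 / fact k) * umbral_pair (g_fps lam ^ r * f_fps lam ^ k) p * deg_bernoulli r lam k x)"
proof -
  let ?B = "deg_bernoulli_gf lam r x"
  have "poly p x = umbral_pair (g_fps lam ^ r * (?B oo f_fps lam)) p"
    by (simp add: deg_bernoulli_gf_compose_f_fps[OF assms] umbral_pair_fps_exp)
  also have "\<dots> = umbral_pair (\<Sum>k\<le>degree p. fps_const (?B $ k) * (g_fps lam ^ r * f_fps lam ^ k)) p"
    by (rule umbral_pair_cong) (simp add: fps_nth_mult_compose fps_sum_nth)
  also have "\<dots> = (\<Sum>k\<le>degree p.
           (1 / fact k) * umbral_pair (g_fps lam ^ r * f_fps lam ^ k) p * deg_bernoulli r lam k x)"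
    by (simp add: umbral_pair_sum umbral_pair_const_mult deg_bernoulli_def) (simp add: mult.commute)
  finally show ?thesis .
qed

theorem theorem4p1:
  fixes lam :: real and r n :: nat and p :: "complex poly"
  assumes "lam \<noteq> 0" and "degree p = n"
  shows "(r > n \<longrightarrow> (\<forall>x. poly p x =
            (\<Sum>k\<le>n. (1 / fact k) *
               (\<Sum>j\<le>k. (-1) ^ (k - j) * of_nat (k choose j) *
                   poly (fps_act (g_fps lam ^ (r - k)) p) (of_nat j))
               * deg_bernoulli r lam k x)))
       \<and> (r \<le> n \<longrightarrow> (\<forall>x. poly p x =
            (\<Sum>k<r. (1 / fact k) *
               (\<Sum>j\<le>k. (-1) ^ (k - j) * of_nat (k choose j) *
                   poly (fps_act (g_fps lam ^ (r - k)) p) (of_nat j))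
               * deg_bernoulli r lam k x)
          + (\<Sum>k=r..n. (1 / fact k) *
               (\<Sum>j\<le>r. (-1) ^ (r - j) * of_nat (r choose j) *
                   poly (fps_act (f_fps lam ^ (k - r)) p) (of_nat j))
               * deg_bernoulli r lam k x)))"
proof (intro conjI impI allI, goal_cases)
  case (1 x)
  then show ?case
    using poly_eq_deg_bernoulli_expansion[OF assms(1), of p x r]
    by (simp add: assms(2) sum_forward_difference_fps_act g_fps_power_mult_exp_minus_one_power[OF assms(1)])
next
  case (2 x)
  then have "sum t {..n} = sum t {..<r} + sum t {r..n}" for t :: "nat \<Rightarrow> complex"
    by (subst sum.union_disjoint[symmetric]) (auto intro: arg_cong[where f = "sum t"])
  then show ?case
    using poly_eq_deg_bernoulli_expansion[OF assms(1), of p x r]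
    by (simp add: assms(2) sum_forward_difference_fps_act
        g_fps_power_mult_exp_minus_one_power[OF assms(1)] f_fps_power_mult_exp_minus_one_power[OF assms(1)])
qed

end
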